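(* Let $(V,\nu)$ and $(W,\omega)$ be matrix gauge spaces with $\mathbb{C}$-proper matrix gauges, and let $(V,V_{ac},h)$ and $(W,W_{ac},h')$ be the induced triples, i.e. $V_{ac}^n=\{x:\nu_n(-x)=0\}$, $h_n(x)=\max\{\nu_n(x),\nu_n(-x)\}$, and similarly for $W$ with $\omega$. Let $\phi:V\to W$ be linear. (i) If $\phi$ is completely gauge contractive (i.e. $\omega_n(\phi^{(n)}(x))\le\nu_n(x)$ for all $n$ and $x\in M_n(V)$), then $\phi$ is real-cpcc. (ii) If $\phi$ is real-cpcc, then $\omega_n(\phi^{(n)}(x))\le\nu_{max}^n(x)$ for all $n$ and $x\in M_n(V)$, where $\nu_{max}^n(x)=\inf\{h_n(x+p):p\in V_{ac}^n\}$.
   Context: For a complex vector space $V$, $M_n(V)$ is the $n\times n$ matrices over $V$ and $\phi^{(n)}$ is the entrywise application of a linear map $\phi$. A matrix gauge is a sequence $\{\nu_n:M_n(V)\to[0,\infty)\}$ with $\nu_n(x+y)\le\nu_n(x)+\nu_n(y)$, $\nu_n(tx)=t\nu_n(x)$ ($t\ge0$), $\nu_k(X^*AX)\le\|X\|^2\nu_n(A)$ for scalar $X\in M_{n,k}$, and $\nu_{n+m}(A\oplus B)=\max\{\nu_n(A),\nu_m(B)\}$; it is $\mathbb{C}$-proper if $\nu_1(i^kz)=0$ for $k=0,1,2,3$ implies $z=0$. A linear map $\phi:V\to W$ is real-completely positive if $\phi^{(n)}(V_{ac}^n)\subseteq W_{ac}^n$ for all $n$, real-completely contractive if $h'_n(\phi^{(n)}(x))\le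 h_n(x)$ for all $n,x$, and real-cpcc if it is both. *)

theory Defs
  imports "HOL-Analysis.Analysis"
begin

class scaleC =
  fixes scaleC :: "complex \<Rightarrow> 'a \<Rightarrow> 'a" (infixr "*\<^sub>C" 75)

class complex_vector = scaleC + ab_group_add +
  assumes scaleC_add_right: "a *\<^sub>C (x + y) = a *\<^sub>C x + a *\<^sub>C y"
    and scaleC_add_left: "(a + b) *\<^sub>C x = a *\<^sub>C x + b *\<^sub>C x"
    and scaleC_scaleC: "a *\<^sub>C (b *\<^sub>C x) = (a * b) *\<^sub>C x"
    and scaleC_one: "1 *\<^sub>C x = x"

definition clinear_map :: "('v::complex_vector \<Rightarrow> 'w::complex_vector) \<Rightarrow> bool" where
  "clinear_map f \<longleftrightarrow> (\<forall>x y. f (x + y) = f x + f y) \<and> (\<forall>a x. f (a *\<^sub>C x) = a *\<^sub>C f x)"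

definition mats :: "nat \<Rightarrow> nat \<Rightarrow> (nat \<Rightarrow> nat \<Rightarrow> 'a::zero) set" where
  "mats n m = {A. \<forall>i j. (n \<le> i \<or> m \<le> j) \<longrightarrow> A i j = 0}"

abbreviation sqmats :: "nat \<Rightarrow> (nat \<Rightarrow> nat \<Rightarrow> 'a::zero) set" where
  "sqmats n \<equiv> mats n n"

definition ampl :: "('v \<Rightarrow> 'w) \<Rightarrow> (nat \<Rightarrow> nat \<Rightarrow> 'v) \<Rightarrow> (nat \<Rightarrow> nat \<Rightarrow> 'w)" where
  "ampl f A = (\<lambda>i j. f (A i j))"

text \<open>X^* A X for a scalar n x k matrix X and A in M_n(V); result is k x k.\<close>
definition cong_mat :: "nat \<Rightarrow> nat \<Rightarrow> (nat \<Rightarrow> nat \<Rightarrow> complex) \<Rightarrow> (nat \<Rightarrow> nat \<Rightarrow> 'v::complex_vector)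
    \<Rightarrow> (nat \<Rightarrow> nat \<Rightarrow> 'v)" where
  "cong_mat n k X A = (\<lambda>i j. if i < k \<and> j < k then
       (\<Sum>p<n. \<Sum>q<n. (cnj (X p i) * X q j) *\<^sub>C A p q) else 0)"

definition vnorm :: "nat \<Rightarrow> (nat \<Rightarrow> complex) \<Rightarrow> real" where
  "vnorm k v = sqrt (\<Sum>i<k. (cmod (v i))\<^sup>2)"

definition opnorm :: "nat \<Rightarrow> nat \<Rightarrow> (nat \<Rightarrow> nat \<Rightarrow> complex) \<Rightarrow> real" where
  "opnorm n k X = Sup {vnorm n (\<lambda>i. \<Sum>j<k. X i j * v j) | v. vnorm k v \<le> 1}"

definition dsum :: "nat \<Rightarrow> nat \<Rightarrow> (nat \<Rightarrow> nat \<Rightarrow> 'a::zero) \<Rightarrow> (nat \<Rightarrow> nat \<Rightarrow> 'a) \<Rightarrow> (nat \<Rightarrow> nat \<Rightarrow> 'a)" where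
  "dsum n m A B = (\<lambda>i j. if i < n \<and> j < n then A i j
      else if n \<le> i \<and> i < n + m \<and> n \<le> j \<and> j < n + m then B (i - n) (j - n) else 0)"

definition mat1 :: "'a::zero \<Rightarrow> (nat \<Rightarrow> nat \<Rightarrow> 'a)" where
  "mat1 z = (\<lambda>i j. if i = 0 \<and> j = 0 then z else 0)"

definition matrix_gauge :: "(nat \<Rightarrow> (nat \<Rightarrow> nat \<Rightarrow> 'v::complex_vector) \<Rightarrow> real) \<Rightarrow> bool" where
  "matrix_gauge \<nu> \<longleftrightarrow>
     (\<forall>n\<ge>1. \<forall>x\<in>sqmats n. 0 \<le> \<nu> n x) \<and>
     (\<forall>n\<ge>1. \<forall>x\<in>sqmats n. \<forall>y\<in>sqmats n. \<nu> n (\<lambda>i j. x i j + y i j) \<le> \<nu> n x + \<nu> n y) \<and>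
     (\<forall>n\<ge>1. \<forall>x\<in>sqmats n. \<forall>t::real. 0 \<le> t \<longrightarrow>
         \<nu> n (\<lambda>i j. complex_of_real t *\<^sub>C x i j) = t * \<nu> n x) \<and>
     (\<forall>n\<ge>1. \<forall>k\<ge>1. \<forall>X\<in>mats n k. \<forall>A\<in>sqmats n.
         \<nu> k (cong_mat n k X A) \<le> (opnorm n k X)\<^sup>2 * \<nu> n A) \<and>
     (\<forall>n\<ge>1. \<forall>m\<ge>1. \<forall>A\<in>sqmats n. \<forall>B\<in>sqmats m.
         \<nu> (n + m) (dsum n m A B) = max (\<nu> n A) (\<nu> m B))"

definition C_proper :: "(nat \<Rightarrow> (nat \<Rightarrow> nat \<Rightarrow> 'v::complex_vector) \<Rightarrow> real) \<Rightarrow> bool" where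
  "C_proper \<nu> \<longleftrightarrow> (\<forall>z. (\<forall>k::nat\<in>{0,1,2,3}. \<nu> 1 (mat1 ((\<i> ^ k) *\<^sub>C z)) = 0) \<longrightarrow> z = 0)"

definition acone :: "(nat \<Rightarrow> (nat \<Rightarrow> nat \<Rightarrow> 'v::complex_vector) \<Rightarrow> real) \<Rightarrow> nat \<Rightarrow> (nat \<Rightarrow> nat \<Rightarrow> 'v) set" where
  "acone \<nu> n = {x\<in>sqmats n. \<nu> n (\<lambda>i j. - x i j) = 0}"

definition hnorm :: "(nat \<Rightarrow> (nat \<Rightarrow> nat \<Rightarrow> 'v::complex_vector) \<Rightarrow> real) \<Rightarrow> nat \<Rightarrow> (nat \<Rightarrow> nat \<Rightarrow> 'v) \<Rightarrow> real" where
  "hnorm \<nu> n x = max (\<nu> n x) (\<nu> n (\<lambda>i j. - x i j))"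

definition nu_max :: "(nat \<Rightarrow> (nat \<Rightarrow> nat \<Rightarrow> 'v::complex_vector) \<Rightarrow> real) \<Rightarrow> nat \<Rightarrow> (nat \<Rightarrow> nat \<Rightarrow> 'v) \<Rightarrow> real" where
  "nu_max \<nu> n x = Inf {hnorm \<nu> n (\<lambda>i j. x i j + p i j) | p. p \<in> acone \<nu> n}"

definition completely_gauge_contractive ::
  "(nat \<Rightarrow> (nat \<Rightarrow> nat \<Rightarrow> 'v::complex_vector) \<Rightarrow> real) \<Rightarrow> (nat \<Rightarrow> (nat \<Rightarrow> nat \<Rightarrow> 'w::complex_vector) \<Rightarrow> real)
     \<Rightarrow> ('v \<Rightarrow> 'w) \<Rightarrow> bool" where
  "completely_gauge_contractive \<nu> \<omega> \<phi> \<longleftrightarrow>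
     (\<forall>n\<ge>1. \<forall>x\<in>sqmats n. \<omega> n (ampl \<phi> x) \<le> \<nu> n x)"

definition real_cp ::
  "(nat \<Rightarrow> (nat \<Rightarrow> nat \<Rightarrow> 'v::complex_vector) \<Rightarrow> real) \<Rightarrow> (nat \<Rightarrow> (nat \<Rightarrow> nat \<Rightarrow> 'w::complex_vector) \<Rightarrow> real)
     \<Rightarrow> ('v \<Rightarrow> 'w) \<Rightarrow> bool" where
  "real_cp \<nu> \<omega> \<phi> \<longleftrightarrow> (\<forall>n\<ge>1. ampl \<phi> ` acone \<nu> n \<subseteq> acone \<omega> n)"

definition real_cc ::
  "(nat \<Rightarrow> (nat \<Rightarrow> nat \<Rightarrow> 'v::complex_vector) \<Rightarrow> real) \<Rightarrow> (nat \<Rightarrow> (nat \<Rightarrow> nat \<Rightarrow> 'w::complex_vector) \<Rightarrow> real)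
     \<Rightarrow> ('v \<Rightarrow> 'w) \<Rightarrow> bool" where
  "real_cc \<nu> \<omega> \<phi> \<longleftrightarrow> (\<forall>n\<ge>1. \<forall>x\<in>sqmats n. hnorm \<omega> n (ampl \<phi> x) \<le> hnorm \<nu> n x)"

definition real_cpcc ::
  "(nat \<Rightarrow> (nat \<Rightarrow> nat \<Rightarrow> 'v::complex_vector) \<Rightarrow> real) \<Rightarrow> (nat \<Rightarrow> (nat \<Rightarrow> nat \<Rightarrow> 'w::complex_vector) \<Rightarrow> real)
     \<Rightarrow> ('v \<Rightarrow> 'w) \<Rightarrow> bool" where
  "real_cpcc \<nu> \<omega> \<phi> \<longleftrightarrow> real_cp \<nu> \<omega> \<phi> \<and> real_cc \<nu> \<omega> \<phi>"

end

theory Submission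
  imports Defs
begin

text \<open>Both parts come from the two defining identities of the triple. (i) If \<phi> contracts the
gauges, it sends \<nu>-null matrices -x to \<omega>-null ones and contracts both \<nu>(x) and \<nu>(-x), hence h.
(ii) For p in the cone, \<phi>(p) lies in the cone of W, so \<omega>(-\<phi>(p)) = 0 and subadditivity gives
\<omega>(\<phi>(x)) \<le> \<omega>(\<phi>(x + p)) \<le> h'(\<phi>(x + p)) \<le> h(x + p); take the infimum over p, which ranges over a nonempty set since 0 is
in the cone.\<close>

lemma clinear_map_add: "clinear_map f \<Longrightarrow> f (a + b) = f a + f b"
  unfolding clinear_map_def by blast

lemma clinear_map_zero: "clinear_map f \<Longrightarrow> f 0 = 0"
  using clinear_map_add[of f 0 0] by simp

lemma clinear_map_minus: "clinear_map f \<Longrightarrow> f (- a) = - f a"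
  using clinear_map_add[of f a "- a"] clinear_map_zero[of f]
  by (simp add: eq_neg_iff_add_eq_0 add.commute)

lemma scaleC_zero_left: "(0::complex) *\<^sub>C (x::'a::complex_vector) = 0"
  using scaleC_add_left[of 0 0 x] by simp

lemma zero_in_mats: "(\<lambda>i j. 0) \<in> mats n m"
  unfolding mats_def by auto

lemma minus_in_mats: "(x::nat \<Rightarrow> nat \<Rightarrow> 'a::ab_group_add) \<in> mats n m \<Longrightarrow> (\<lambda>i j. - x i j) \<in> mats n m"
  unfolding mats_def by auto

lemma add_in_mats:
  "(x::nat \<Rightarrow> nat \<Rightarrow> 'a::ab_group_add) \<in> mats n m \<Longrightarrow> y \<in> mats n m \<Longrightarrow> (\<lambda>i j. x i j + y i j) \<in> mats n m"
  unfolding mats_def by auto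

lemma ampl_in_mats: "clinear_map f \<Longrightarrow> x \<in> mats n m \<Longrightarrow> ampl f x \<in> mats n m"
  using clinear_map_zero[of f] unfolding mats_def ampl_def by auto

lemma ampl_minus: "clinear_map f \<Longrightarrow> ampl f (\<lambda>i j. - x i j) = (\<lambda>i j. - ampl f x i j)"
  unfolding ampl_def by (simp add: clinear_map_minus)

lemma ampl_add: "clinear_map f \<Longrightarrow> ampl f (\<lambda>i j. x i j + y i j) = (\<lambda>i j. ampl f x i j + ampl f y i j)"
  unfolding ampl_def by (simp add: clinear_map_add)

lemma matrix_gauge_nonneg:
  "matrix_gauge \<nu> \<Longrightarrow> n \<ge> 1 \<Longrightarrow> x \<in> sqmats n \<Longrightarrow> 0 \<le> \<nu> n x"
  unfolding matrix_gauge_def by blast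

lemma matrix_gauge_triangle:
  "matrix_gauge \<nu> \<Longrightarrow> n \<ge> 1 \<Longrightarrow> x \<in> sqmats n \<Longrightarrow> y \<in> sqmats n \<Longrightarrow>
    \<nu> n (\<lambda>i j. x i j + y i j) \<le> \<nu> n x + \<nu> n y"
  unfolding matrix_gauge_def by blast

lemma matrix_gauge_pos_homogeneous:
  "matrix_gauge \<nu> \<Longrightarrow> n \<ge> 1 \<Longrightarrow> x \<in> sqmats n \<Longrightarrow> 0 \<le> t \<Longrightarrow>
    \<nu> n (\<lambda>i j. complex_of_real t *\<^sub>C x i j) = t * \<nu> n x"
  unfolding matrix_gauge_def by blast

lemma matrix_gauge_zero:
  assumes "matrix_gauge \<nu>" "n \<ge> 1"
  shows "\<nu> n (\<lambda>i j. 0) = 0"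
  using matrix_gauge_pos_homogeneous[OF assms zero_in_mats, of 0] by (simp add: scaleC_zero_left)

lemma zero_in_acone: "matrix_gauge \<nu> \<Longrightarrow> n \<ge> 1 \<Longrightarrow> (\<lambda>i j. 0) \<in> acone \<nu> n"
  unfolding acone_def using zero_in_mats matrix_gauge_zero by fastforce

lemma completely_gauge_contractive_imp_real_cp:
  assumes \<omega>: "matrix_gauge \<omega>" and \<phi>: "clinear_map \<phi>"
    and contr: "completely_gauge_contractive \<nu> \<omega> \<phi>"
  shows "real_cp \<nu> \<omega> \<phi>"
  unfolding real_cp_def
proof (intro allI impI image_subsetI)
  fix n x assume n: "n \<ge> 1" and x: "x \<in> acone \<nu> n"
  then have xm: "x \<in> sqmats n" and null: "\<nu> n (\<lambda>i j. - x i j) = 0"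
    unfolding acone_def by auto
  have "\<omega> n (\<lambda>i j. - ampl \<phi> x i j) = \<omega> n (ampl \<phi> (\<lambda>i j. - x i j))"
    by (simp add: ampl_minus[OF \<phi>])
  also have "\<dots> \<le> 0"
    using contr n minus_in_mats[OF xm] null unfolding completely_gauge_contractive_def by fastforce
  finally have "\<omega> n (\<lambda>i j. - ampl \<phi> x i j) = 0"
    using matrix_gauge_nonneg[OF \<omega> n minus_in_mats[OF ampl_in_mats[OF \<phi> xm]]] by simp
  then show "ampl \<phi> x \<in> acone \<omega> n"
    unfolding acone_def using ampl_in_mats[OF \<phi> xm] by simp
qed

lemma completely_gauge_contractive_imp_real_cc:
  fixes \<phi> :: "'v::complex_vector \<Rightarrow> 'w::complex_vector"
  assumes \<phi>: "clinear_map \<phi>" and contr: "completely_gauge_contractive \<nu> \<omega> \<phi>"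
  shows "real_cc \<nu> \<omega> \<phi>"
  unfolding real_cc_def hnorm_def
proof (intro allI impI ballI max.mono)
  fix n and x :: "nat \<Rightarrow> nat \<Rightarrow> 'v" assume n: "n \<ge> 1" and xm: "x \<in> sqmats n"
  show "\<omega> n (ampl \<phi> x) \<le> \<nu> n x"
    using contr n xm unfolding completely_gauge_contractive_def by blast
  have "\<omega> n (ampl \<phi> (\<lambda>i j. - x i j)) \<le> \<nu> n (\<lambda>i j. - x i j)"
    using contr n minus_in_mats[OF xm] unfolding completely_gauge_contractive_def by blast
  then show "\<omega> n (\<lambda>i j. - ampl \<phi> x i j) \<le> \<nu> n (\<lambda>i j. - x i j)"
    by (simp add: ampl_minus[OF \<phi>])
qed

lemma completely_gauge_contractive_imp_real_cpcc:
  "matrix_gauge \<omega> \<Longrightarrow> clinear_map \<phi> \<Longrightarrow> completely_gauge_contractive \<nu> \<omega> \<phi> \<Longrightarrow> real_cpcc \<nu> \<omega> \<phi>"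
  unfolding real_cpcc_def
  by (blast intro: completely_gauge_contractive_imp_real_cp completely_gauge_contractive_imp_real_cc)

lemma real_cpcc_gauge_le_hnorm_add_acone:
  assumes \<omega>: "matrix_gauge \<omega>" and \<phi>: "clinear_map \<phi>" and cpcc: "real_cpcc \<nu> \<omega> \<phi>"
    and n: "n \<ge> 1" and xm: "x \<in> sqmats n" and p: "p \<in> acone \<nu> n"
  shows "\<omega> n (ampl \<phi> x) \<le> hnorm \<nu> n (\<lambda>i j. x i j + p i j)"
proof -
  have pm: "p \<in> sqmats n" using p unfolding acone_def by auto
  have xp: "(\<lambda>i j. x i j + p i j) \<in> sqmats n" using add_in_mats[OF xm pm] .
  have null: "\<omega> n (\<lambda>i j. - ampl \<phi> p i j) = 0"
    using cpcc n p unfolding real_cpcc_def real_cp_def acone_def by blast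
  have "ampl \<phi> x = (\<lambda>i j. ampl \<phi> (\<lambda>i j. x i j + p i j) i j + - ampl \<phi> p i j)"
    by (simp add: ampl_add[OF \<phi>])
  then have "\<omega> n (ampl \<phi> x) \<le> \<omega> n (ampl \<phi> (\<lambda>i j. x i j + p i j)) + \<omega> n (\<lambda>i j. - ampl \<phi> p i j)"
    using matrix_gauge_triangle[OF \<omega> n ampl_in_mats[OF \<phi> xp] minus_in_mats[OF ampl_in_mats[OF \<phi> pm]]]
    by simp
  also have "\<dots> \<le> hnorm \<omega> n (ampl \<phi> (\<lambda>i j. x i j + p i j))"
    using null unfolding hnorm_def by simp
  also have "\<dots> \<le> hnorm \<nu> n (\<lambda>i j. x i j + p i j)"
    using cpcc n xp unfolding real_cpcc_def real_cc_def by blast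
  finally show ?thesis .
qed

lemma real_cpcc_gauge_le_nu_max:
  assumes \<nu>: "matrix_gauge \<nu>" and \<omega>: "matrix_gauge \<omega>" and \<phi>: "clinear_map \<phi>"
    and cpcc: "real_cpcc \<nu> \<omega> \<phi>" and n: "n \<ge> 1" and xm: "x \<in> sqmats n"
  shows "\<omega> n (ampl \<phi> x) \<le> nu_max \<nu> n x"
  unfolding nu_max_def
proof (rule cInf_greatest)
  show "{hnorm \<nu> n (\<lambda>i j. x i j + p i j) |p. p \<in> acone \<nu> n} \<noteq> {}"
    using zero_in_acone[OF \<nu> n] by blast
next
  fix h assume "h \<in> {hnorm \<nu> n (\<lambda>i j. x i j + p i j) |p. p \<in> acone \<nu> n}"
  then obtain p where p: "p \<in> acone \<nu> n" and h: "h = hnorm \<nu> n (\<lambda>i j. x i j + p i j)"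
    by blast
  show "\<omega> n (ampl \<phi> x) \<le> h"
    unfolding h by (rule real_cpcc_gauge_le_hnorm_add_acone[OF \<omega> \<phi> cpcc n xm p])
qed

theorem proposition6p1:
  fixes \<nu> :: "nat \<Rightarrow> (nat \<Rightarrow> nat \<Rightarrow> 'v::complex_vector) \<Rightarrow> real"
    and \<omega> :: "nat \<Rightarrow> (nat \<Rightarrow> nat \<Rightarrow> 'w::complex_vector) \<Rightarrow> real"
    and \<phi> :: "'v \<Rightarrow> 'w"
  assumes "matrix_gauge \<nu>" and "C_proper \<nu>"
    and "matrix_gauge \<omega>" and "C_proper \<omega>"
    and "clinear_map \<phi>"
  shows "(completely_gauge_contractive \<nu> \<omega> \<phi> \<longrightarrow> real_cpcc \<nu> \<omega> \<phi>) \<and>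
         (real_cpcc \<nu> \<omega> \<phi> \<longrightarrow>
            (\<forall>n\<ge>1. \<forall>x\<in>sqmats n. \<omega> n (ampl \<phi> x) \<le> nu_max \<nu> n x))"
proof (intro conjI impI allI ballI)
  show "real_cpcc \<nu> \<omega> \<phi>" if "completely_gauge_contractive \<nu> \<omega> \<phi>"
    using completely_gauge_contractive_imp_real_cpcc[OF assms(3,5) that] .
  show "\<omega> n (ampl \<phi> x) \<le> nu_max \<nu> n x"
    if "real_cpcc \<nu> \<omega> \<phi>" "n \<ge> 1" "x \<in> sqmats n" for n x
    using real_cpcc_gauge_le_nu_max[OF assms(1,3,5) that] .
qed

end
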